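(* Let $\beta>2\alpha>0$ with $\beta+2\alpha>1$, assume $s_N=o\big(\sqrt N/\log N\big)$ and let $0<r<m^*$. Then there exists $\rho>0$ (depending on $r$ but not on $N$) such that $$\inf_{x\in\Delta_N^r}\varphi_N\Big(\sqrt{\tfrac{s_N}{N}}x\Big)\ge\varphi_N(\overrightarrow{m}^* )+\rho.$$
   Context: $A=\beta I+\alpha(P+P^T)$ is the $s_N\times s_N$ symmetric circulant matrix ($P$ the cyclic shift), $e_k$ the standard basis of $\mathbb{R}^{s_N}$, $\varphi_N(x)=\frac12x^TAx-\sum_{k=1}^{s_N}\log\cosh(x^TAe_k)$. $m^*$ is the largest solution of $x=\tanh((\beta+2\alpha)x)$ and $\overrightarrow{m}^*=(m^*,\dots,m^* )\in\mathbb{R}^{s_N}$. Let $\lambda_{\min},\lambda_{\max}$ be the smallest and largest eigenvalues of $A$, fix $R>2\lambda_{\max}/\lambda_{\min}$, let $B_{R\sqrt N}$ be the centered Euclidean ball of radius $R\sqrt N$ in $\mathbb{R}^{s_N}$, and $$\Delta_N^r=B_{R\sqrt N}\setminus\Big(\Big[\sqrt{\tfrac{N}{s_N}}(m^*-r),\sqrt{\tfrac{N}{s_N}}(m^*+r)\Big]^{s_N}\cup\Big[\sqrt{\tfrac{N}{s_N}}(-m^*-r),\sqrt{\tfrac{N}{s_N}}(-m^*+r)\Big]^{s_N}\Big).$$ *)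

theory Defs
  imports "HOL-Analysis.Analysis" "HOL-Library.Landau_Symbols"
begin

text \<open>Vectors in R^s are functions nat => real, only indices k < s matter.
  Entries (0-based) of A = beta I + alpha (P + P^T), P the cyclic shift P e_j = e_{(j+1) mod s}.\<close>

definition shiftP :: "nat \<Rightarrow> nat \<Rightarrow> nat \<Rightarrow> real" where
  "shiftP s i j = (if i = (j + 1) mod s then 1 else 0)"

definition circA :: "real \<Rightarrow> real \<Rightarrow> nat \<Rightarrow> nat \<Rightarrow> nat \<Rightarrow> real" where
  "circA \<alpha> \<beta> s i j = \<beta> * (if i = j then 1 else 0) + \<alpha> * (shiftP s i j + shiftP s j i)"

definition quadA :: "real \<Rightarrow> real \<Rightarrow> nat \<Rightarrow> (nat \<Rightarrow> real) \<Rightarrow> real" where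
  "quadA \<alpha> \<beta> s x = (\<Sum>i<s. \<Sum>j<s. x i * circA \<alpha> \<beta> s i j * x j)"

definition xAe :: "real \<Rightarrow> real \<Rightarrow> nat \<Rightarrow> (nat \<Rightarrow> real) \<Rightarrow> nat \<Rightarrow> real" where
  "xAe \<alpha> \<beta> s x k = (\<Sum>i<s. x i * circA \<alpha> \<beta> s i k)"

definition phiN :: "real \<Rightarrow> real \<Rightarrow> nat \<Rightarrow> (nat \<Rightarrow> real) \<Rightarrow> real" where
  "phiN \<alpha> \<beta> s x = quadA \<alpha> \<beta> s x / 2 - (\<Sum>k<s. ln (cosh (xAe \<alpha> \<beta> s x k)))"

text \<open>Eigenvalues of the s x s matrix A (real symmetric, so all real).\<close>
definition eigvalsA :: "real \<Rightarrow> real \<Rightarrow> nat \<Rightarrow> real set" where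
  "eigvalsA \<alpha> \<beta> s = {\<mu>. \<exists>x::nat \<Rightarrow> real. (\<exists>i<s. x i \<noteq> 0) \<and>
      (\<forall>i<s. (\<Sum>j<s. circA \<alpha> \<beta> s i j * x j) = \<mu> * x i)}"

definition lam_min :: "real \<Rightarrow> real \<Rightarrow> nat \<Rightarrow> real" where
  "lam_min \<alpha> \<beta> s = Min (eigvalsA \<alpha> \<beta> s)"

definition lam_max :: "real \<Rightarrow> real \<Rightarrow> nat \<Rightarrow> real" where
  "lam_max \<alpha> \<beta> s = Max (eigvalsA \<alpha> \<beta> s)"

definition m_star :: "real \<Rightarrow> real \<Rightarrow> real" where
  "m_star \<alpha> \<beta> = (GREATEST x::real. x = tanh ((\<beta> + 2 * \<alpha>) * x))"

definition DeltaN :: "real \<Rightarrow> real \<Rightarrow> real \<Rightarrow> nat \<Rightarrow> nat \<Rightarrow> real \<Rightarrow> (nat \<Rightarrow> real) set" where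
  "DeltaN \<alpha> \<beta> R N s r =
     (let c = sqrt (real N / real s); m = m_star \<alpha> \<beta> in
      {x. (\<forall>k\<ge>s. x k = 0) \<and> (\<Sum>k<s. (x k)\<^sup>2) \<le> (R * sqrt (real N))\<^sup>2 \<and>
          \<not> (\<forall>k<s. c * (m - r) \<le> x k \<and> x k \<le> c * (m + r)) \<and>
          \<not> (\<forall>k<s. c * (- m - r) \<le> x k \<and> x k \<le> c * (- m + r))})"

end

(*
  Write c = beta + 2 alpha and h(t) = cw_pot c t = t^2/(2c) - ln (cosh t).  The matrix is
  A = c I - alpha L with L the Laplacian of the s-cycle, and 0 <= L <= 4, so completing the
  square gives
    phiN y >= sum_k h((A y)_k) + alpha (beta - 2 alpha)/(2c) * sum_k (y_k - y_(k+1))^2,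
  with equality s h(c m_star) at the constant vector m_star.  Since c > 1, h has exactly two
  global minimisers, +-c m_star, with a quantitative gap away from them.  So if phiN y is within
  rho of its value at the constant vector, every bond y_k - y_(k+1) is short and every local
  field (A y)_k is close to +-c m_star; this puts each y_k close to +-m_star, and the short
  bonds force all of them into the same well, i.e. y lies in one of the two boxes removed from
  Delta_N^r.  The bound is uniform in s and y.
*)

theory Submission
  imports Defs
begin

section \<open>The one-site mean-field potential\<close>

definition cw_pot :: "real \<Rightarrow> real \<Rightarrow> real" where
  "cw_pot c t = t\<^sup>2 / (2 * c) - ln (cosh t)"

lemma cw_pot_has_real_derivative: "c \<noteq> 0 \<Longrightarrow> (cw_pot c has_real_derivative t / c - tanh t) (at t)"
  unfolding cw_pot_def tanh_def
  by (auto intro!: derivative_eq_intros simp: power2_eq_square field_simps)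

lemma continuous_on_cw_pot: "c \<noteq> 0 \<Longrightarrow> continuous_on S (cw_pot c)"
  using cw_pot_has_real_derivative
  by (meson DERIV_isCont continuous_at_imp_continuous_on)

lemma cw_pot_abs [simp]: "cw_pot c \<bar>t\<bar> = cw_pot c t"
  by (simp add: cw_pot_def)

lemma cw_pot_0 [simp]: "cw_pot c 0 = 0"
  by (simp add: cw_pot_def)

lemma ln_cosh_le_abs: "ln (cosh t) \<le> \<bar>t :: real\<bar>"
proof -
  have "exp t \<le> exp \<bar>t\<bar>" "exp (- t) \<le> exp \<bar>t\<bar>"
    by (simp_all add: abs_ge_self abs_ge_minus_self)
  then have "exp t + exp (- t) \<le> 2 * exp \<bar>t\<bar>"
    by (metis add_mono mult_2)
  then have "cosh t \<le> exp \<bar>t\<bar>"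
    unfolding cosh_field_def by simp
  then show ?thesis
    by (metis cosh_real_pos ln_exp ln_le_cancel_iff exp_gt_zero)
qed

lemma cw_pot_pos_large:
  assumes "c > 0" and "\<bar>t\<bar> \<ge> 2 * c + 1"
  shows "cw_pot c t > 0"
proof -
  have "2 * c * \<bar>t\<bar> < \<bar>t\<bar> * \<bar>t\<bar>"
    using assms by (intro mult_strict_right_mono) auto
  then have "\<bar>t\<bar> < t\<^sup>2 / (2 * c)"
    using assms by (simp add: power2_eq_square field_simps)
  then show ?thesis
    using ln_cosh_le_abs[of t] by (simp add: cw_pot_def)
qed

lemma tanh_fixed_point_unique:
  fixes c x y :: real
  assumes "0 < x" "0 < y" "x = tanh (c * x)" "y = tanh (c * y)"
  shows "x = y"
proof -
  have False if ab: "0 < a" "a < b" "a = tanh (c * a)" "b = tanh (c * b)" for a b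
  proof -
    define g where "g t = tanh (c * t) - t" for t
    define g' where "g' t = c * (1 - (tanh (c * t))\<^sup>2) - 1" for t
    have "c * a > 0"
      using ab by (metis tanh_real_pos_iff)
    then have c: "c > 0"
      using ab by (simp add: zero_less_mult_iff)
    have "(g has_real_derivative g' t) (at t)" for t
      unfolding g_def g'_def by (auto intro!: derivative_eq_intros)
    then have mvt: "\<exists>z. u < z \<and> z < v \<and> g v - g u = (v - u) * g' z" if "u < v" for u v
      using MVT2[OF that] by blast
    have "g 0 = 0" "g a = 0" "g b = 0"
      using ab by (simp_all add: g_def)
    moreover obtain z1 where z1: "0 < z1" "z1 < a" "g a - g 0 = (a - 0) * g' z1"
      using mvt[of 0 a] ab by blast
    moreover obtain z2 where z2: "a < z2" "z2 < b" "g b - g a = (b - a) * g' z2"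
      using mvt[of a b] ab by blast
    ultimately have z: "0 < z1" "z1 < z2" "g' z1 = 0" "g' z2 = 0"
      using ab by auto
    then have "c * (1 - (tanh (c * z1))\<^sup>2) = c * (1 - (tanh (c * z2))\<^sup>2)"
      by (simp add: g'_def)
    then have "(tanh (c * z1))\<^sup>2 = (tanh (c * z2))\<^sup>2"
      using c by simp
    moreover have "0 < tanh (c * z1)" "tanh (c * z1) < tanh (c * z2)"
      using z c by simp_all
    ultimately show False
      using power_strict_mono[of "tanh (c * z1)" "tanh (c * z2)" 2] by simp
  qed
  then show ?thesis
    using assms by (metis linorder_neqE_linordered_idom)
qed

lemma m_star_eqI:
  assumes "0 < m" and "m = tanh ((\<beta> + 2 * \<alpha>) * m)"
  shows "m_star \<alpha> \<beta> = m"
  unfolding m_star_def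
proof (rule Greatest_equality)
  fix y assume y: "y = tanh ((\<beta> + 2 * \<alpha>) * y)"
  show "y \<le> m"
  proof (cases "y > 0")
    case True
    then show ?thesis
      using tanh_fixed_point_unique[OF True assms(1) y assms(2)] by simp
  qed (use assms(1) in simp)
qed (rule assms(2))

lemma cw_pot_neg_near_0:
  assumes "c > 1"
  obtains t where "t > 0" "cw_pot c t < 0"
proof -
  have "((\<lambda>t. t / c - tanh t) has_real_derivative 1 / c - 1) (at 0)"
    using assms by (auto intro!: derivative_eq_intros)
  moreover have "1 / c - 1 < 0"
    using assms by simp
  ultimately have "\<exists>d>0. \<forall>h>0. h < d \<longrightarrow> 0 / c - tanh 0 > (0 + h) / c - tanh (0 + h)"
    by (rule DERIV_neg_dec_right)
  then obtain d where "d > 0" and d: "\<And>h. 0 < h \<Longrightarrow> h < d \<Longrightarrow> h / c - tanh h < 0"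
    by auto
  have "cw_pot c (d / 2) < cw_pot c 0"
  proof (rule DERIV_neg_imp_decreasing_open[of 0 "d / 2" "cw_pot c"])
    fix t assume "0 < t" "t < d / 2"
    then have "t / c - tanh t < 0"
      using d \<open>d > 0\<close> by simp
    then show "\<exists>y. (cw_pot c has_real_derivative y) (at t) \<and> y < 0"
      using cw_pot_has_real_derivative[of c t] assms by auto
  next
    show "continuous_on {0..d / 2} (cw_pot c)"
      using continuous_on_cw_pot assms by simp
  qed (use \<open>d > 0\<close> in simp)
  then show thesis
    using that[of "d / 2"] \<open>d > 0\<close> by simp
qed

lemma cw_pot_global_min:
  assumes "c > 1"
  obtains t0 where "t0 > 0" "cw_pot c t0 < 0" "\<And>t. cw_pot c t0 \<le> cw_pot c t"
proof -
  define M where "M = 2 * c + 1"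
  have "continuous_on {0..M} (cw_pot c)"
    using continuous_on_cw_pot assms by simp
  moreover have "{0..M} \<noteq> {}"
    using assms by (simp add: M_def)
  ultimately obtain t0 where t0: "t0 \<in> {0..M}" "\<And>t. t \<in> {0..M} \<Longrightarrow> cw_pot c t0 \<le> cw_pot c t"
    using continuous_attains_inf[OF compact_Icc] by blast
  have large: "cw_pot c t > 0" if "\<bar>t\<bar> \<ge> M" for t
    using cw_pot_pos_large that assms by (simp add: M_def)
  obtain t1 where "t1 > 0" "cw_pot c t1 < 0"
    using cw_pot_neg_near_0 assms by blast
  moreover have "t1 \<le> M"
    using large[of t1] calculation by (cases "t1 \<le> M") auto
  ultimately have neg: "cw_pot c t0 < 0"
    using t0(2)[of t1] by simp
  have "cw_pot c t0 \<le> cw_pot c t" for t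
  proof (cases "\<bar>t\<bar> \<le> M")
    case True
    then show ?thesis
      using t0(2)[of "\<bar>t\<bar>"] by simp
  next
    case False
    then show ?thesis
      using large[of t] neg by simp
  qed
  moreover have "t0 > 0"
    using neg t0(1) by (cases "t0 = 0") auto
  ultimately show thesis
    using that neg by blast
qed

lemma cw_pot_min_fixed_point:
  assumes "c \<noteq> 0" and "\<And>t. cw_pot c t0 \<le> cw_pot c t"
  shows "t0 / c = tanh t0"
  using DERIV_local_min[OF cw_pot_has_real_derivative[OF assms(1)], of 1 t0] assms(2) by simp

lemma cw_pot_minimizers:
  assumes "c > 1" "t0 > 0" "cw_pot c t0 < 0" "\<And>t. cw_pot c t0 \<le> cw_pot c t"
    and "cw_pot c t = cw_pot c t0"
  shows "\<bar>t\<bar> = t0"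
proof -
  define u where "u = \<bar>t\<bar>"
  have "t \<noteq> 0"
    using assms by auto
  then have "u > 0"
    by (simp add: u_def)
  have "cw_pot c u \<le> cw_pot c v" for v
    using assms by (simp add: u_def)
  then have "u / c = tanh u" "t0 / c = tanh t0"
    using cw_pot_min_fixed_point[of c] assms by simp_all
  moreover have "c \<noteq> 0"
    using assms(1) by simp
  ultimately have "u / c = tanh (c * (u / c))" "t0 / c = tanh (c * (t0 / c))"
    by (simp_all add: field_simps)
  moreover have "0 < u / c" "0 < t0 / c"
    using \<open>u > 0\<close> assms(1,2) by simp_all
  ultimately have "u / c = t0 / c"
    using tanh_fixed_point_unique by blast
  then show ?thesis
    using assms(1) by (simp add: u_def)
qed

lemma continuous_gap_on_closed:
  fixes f :: "real \<Rightarrow> real"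
  assumes "continuous_on UNIV f" "closed F" "\<And>t. t \<in> F \<Longrightarrow> a < f t"
    and "a < b" "\<And>t. M \<le> \<bar>t\<bar> \<Longrightarrow> b \<le> f t"
  obtains \<eta> where "\<eta> > 0" "\<And>t. t \<in> F \<Longrightarrow> a + \<eta> \<le> f t"
proof (cases "F \<inter> {-M..M} = {}")
  case True
  then have "b \<le> f t" if "t \<in> F" for t
    using that assms(5)[of t] by (force simp: abs_le_iff)
  then show thesis
    using that[of "b - a"] assms(4) by simp
next
  case False
  have "compact (F \<inter> {-M..M})"
    using closed_Int_compact[OF assms(2) compact_Icc] .
  then obtain t' where t': "t' \<in> F \<inter> {-M..M}" "\<And>t. t \<in> F \<inter> {-M..M} \<Longrightarrow> f t' \<le> f t"
    using continuous_attains_inf[OF _ False, of f] continuous_on_subset[OF assms(1)] by blast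
  have "a + min (f t' - a) (b - a) \<le> f t" if "t \<in> F" for t
  proof (cases "\<bar>t\<bar> \<le> M")
    case True
    then show ?thesis
      using that t'(2)[of t] by (simp add: abs_le_iff)
  next
    case False
    then show ?thesis
      using assms(5)[of t] by simp
  qed
  moreover have "min (f t' - a) (b - a) > 0"
    using t' assms by simp
  ultimately show thesis
    using that by blast
qed

lemma cw_pot_gap:
  assumes "c > 1" "t0 > 0" "cw_pot c t0 < 0" "\<And>t. cw_pot c t0 \<le> cw_pot c t" and "\<delta> > 0"
  obtains \<eta> where "\<eta> > 0"
    "\<And>t. \<delta> \<le> \<bar>t - t0\<bar> \<Longrightarrow> \<delta> \<le> \<bar>t + t0\<bar> \<Longrightarrow> cw_pot c t0 + \<eta> \<le> cw_pot c t"
proof -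
  define F where "F = {t. \<delta> \<le> \<bar>t - t0\<bar> \<and> \<delta> \<le> \<bar>t + t0\<bar>}"
  have "closed F"
    unfolding F_def by (intro closed_Collect_conj closed_Collect_le continuous_intros)
  moreover have "cw_pot c t0 < cw_pot c t" if "t \<in> F" for t
  proof -
    have "\<bar>t\<bar> \<noteq> t0"
      using that \<open>\<delta> > 0\<close> by (auto simp: F_def abs_if split: if_splits)
    then show ?thesis
      using cw_pot_minimizers[OF assms(1-4), of t] assms(4)[of t] by fastforce
  qed
  moreover have "0 \<le> cw_pot c t" if "2 * c + 1 \<le> \<bar>t\<bar>" for t
    using cw_pot_pos_large[of c t] that assms(1) by simp
  moreover have "continuous_on UNIV (cw_pot c)"
    using continuous_on_cw_pot assms(1) by simp
  ultimately obtain \<eta> where "\<eta> > 0" "\<And>t. t \<in> F \<Longrightarrow> cw_pot c t0 + \<eta> \<le> cw_pot c t"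
    using continuous_gap_on_closed[of "cw_pot c" F "cw_pot c t0" 0 "2 * c + 1"] assms(3) by blast
  then show thesis
    using that by (simp add: F_def)
qed

lemma m_star_min_cw_pot:
  assumes "\<beta> + 2 * \<alpha> > 1"
  defines "c \<equiv> \<beta> + 2 * \<alpha>"
  shows "\<And>t. cw_pot c (c * m_star \<alpha> \<beta>) \<le> cw_pot c t"
    and "\<And>\<delta>. \<delta> > 0 \<Longrightarrow> \<exists>\<eta>>0. \<forall>t. \<delta> \<le> \<bar>t - c * m_star \<alpha> \<beta>\<bar> \<longrightarrow> \<delta> \<le> \<bar>t + c * m_star \<alpha> \<beta>\<bar>
          \<longrightarrow> cw_pot c (c * m_star \<alpha> \<beta>) + \<eta> \<le> cw_pot c t"
proof -
  have "c > 1"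
    using assms by simp
  then obtain t0 where t0: "t0 > 0" "cw_pot c t0 < 0" "\<And>t. cw_pot c t0 \<le> cw_pot c t"
    using cw_pot_global_min by blast
  have fixed_point: "t0 / c = tanh (c * (t0 / c))"
    using cw_pot_min_fixed_point[of c t0] t0(3) \<open>c > 1\<close> by (simp add: field_simps)
  have "0 < t0 / c"
    using t0(1) \<open>c > 1\<close> by simp
  then have "m_star \<alpha> \<beta> = t0 / c"
    using m_star_eqI[OF _ fixed_point[unfolded c_def]] by (simp add: c_def)
  then have t0_eq: "t0 = c * m_star \<alpha> \<beta>"
    using \<open>c > 1\<close> by simp
  show "cw_pot c (c * m_star \<alpha> \<beta>) \<le> cw_pot c t" for t
    using t0(3) by (simp add: t0_eq)
  show "\<exists>\<eta>>0. \<forall>t. \<delta> \<le> \<bar>t - c * m_star \<alpha> \<beta>\<bar> \<longrightarrow> \<delta> \<le> \<bar>t + c * m_star \<alpha> \<beta>\<bar>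
          \<longrightarrow> cw_pot c (c * m_star \<alpha> \<beta>) + \<eta> \<le> cw_pot c t" if "\<delta> > 0" for \<delta>
    using cw_pot_gap[OF \<open>c > 1\<close> t0 that] unfolding t0_eq by blast
qed

section \<open>The cycle and the circulant matrix\<close>

definition cyc_succ :: "nat \<Rightarrow> nat \<Rightarrow> nat" where
  "cyc_succ s k = (if Suc k = s then 0 else Suc k)"

definition cyc_pred :: "nat \<Rightarrow> nat \<Rightarrow> nat" where
  "cyc_pred s k = (if k = 0 then s - 1 else k - 1)"

lemma cyc_succ_less: "k < s \<Longrightarrow> cyc_succ s k < s"
  by (auto simp: cyc_succ_def)

lemma cyc_pred_less: "k < s \<Longrightarrow> cyc_pred s k < s"
  by (auto simp: cyc_pred_def)

lemma cyc_pred_succ [simp]: "k < s \<Longrightarrow> cyc_pred s (cyc_succ s k) = k"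
  by (auto simp: cyc_succ_def cyc_pred_def)

lemma cyc_succ_pred [simp]: "k < s \<Longrightarrow> cyc_succ s (cyc_pred s k) = k"
  by (auto simp: cyc_succ_def cyc_pred_def)

lemma cyc_succ_eq_Suc_mod: "k < s \<Longrightarrow> cyc_succ s k = Suc k mod s"
  by (auto simp: cyc_succ_def)

lemma bij_betw_cyc_succ: "bij_betw (cyc_succ s) {..<s} {..<s}"
  by (rule bij_betw_byWitness[where f' = "cyc_pred s"])
    (auto simp: cyc_succ_less cyc_pred_less)

lemma bij_betw_cyc_pred: "bij_betw (cyc_pred s) {..<s} {..<s}"
  by (rule bij_betw_byWitness[where f' = "cyc_succ s"])
    (auto simp: cyc_succ_less cyc_pred_less)

lemma sum_cyc_succ: "(\<Sum>k<s. f (cyc_succ s k)) = (\<Sum>k<s. f k)"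
  using sum.reindex_bij_betw[OF bij_betw_cyc_succ] .

lemma sum_cyc_pred: "(\<Sum>k<s. f (cyc_pred s k)) = (\<Sum>k<s. f k)"
  using sum.reindex_bij_betw[OF bij_betw_cyc_pred] .

definition cyc_lap :: "nat \<Rightarrow> (nat \<Rightarrow> real) \<Rightarrow> nat \<Rightarrow> real" where
  "cyc_lap s y k = 2 * y k - y (cyc_succ s k) - y (cyc_pred s k)"

definition cyc_dirichlet :: "nat \<Rightarrow> (nat \<Rightarrow> real) \<Rightarrow> real" where
  "cyc_dirichlet s y = (\<Sum>k<s. (y k - y (cyc_succ s k))\<^sup>2)"

lemma cyc_succ_eq_iff: "i < s \<Longrightarrow> k < s \<Longrightarrow> cyc_succ s i = k \<longleftrightarrow> i = cyc_pred s k"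
  by (metis cyc_pred_succ cyc_succ_pred)

lemma circA_column:
  assumes "i < s" "k < s"
  shows "circA \<alpha> \<beta> s i k = \<beta> * (if i = k then 1 else 0) + \<alpha> * (if i = cyc_succ s k then 1 else 0)
    + \<alpha> * (if i = cyc_pred s k then 1 else 0)"
  using assms cyc_succ_eq_iff[OF assms] cyc_succ_eq_Suc_mod[OF assms(1)] cyc_succ_eq_Suc_mod[OF assms(2)]
  unfolding circA_def shiftP_def by (simp add: eq_commute[of k])

lemma xAe_eq:
  assumes "k < s"
  shows "xAe \<alpha> \<beta> s y k = \<beta> * y k + \<alpha> * y (cyc_succ s k) + \<alpha> * y (cyc_pred s k)"
proof -
  have "xAe \<alpha> \<beta> s y k = (\<Sum>i<s. \<beta> * (if i = k then y i else 0)
      + \<alpha> * (if i = cyc_succ s k then y i else 0) + \<alpha> * (if i = cyc_pred s k then y i else 0))"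
    unfolding xAe_def using assms by (intro sum.cong) (auto simp: circA_column algebra_simps)
  also have "\<dots> = \<beta> * y k + \<alpha> * y (cyc_succ s k) + \<alpha> * y (cyc_pred s k)"
    using assms cyc_succ_less[OF assms] cyc_pred_less[OF assms]
    by (simp add: sum.distrib sum_distrib_left[symmetric] sum.delta)
  finally show ?thesis .
qed

lemma xAe_eq_cyc_lap:
  "k < s \<Longrightarrow> xAe \<alpha> \<beta> s y k = (\<beta> + 2 * \<alpha>) * y k - \<alpha> * cyc_lap s y k"
  by (simp add: xAe_eq cyc_lap_def algebra_simps)

lemma quadA_eq_sum_xAe: "quadA \<alpha> \<beta> s y = (\<Sum>k<s. xAe \<alpha> \<beta> s y k * y k)"
  unfolding quadA_def xAe_def
  by (subst sum.swap) (simp add: sum_distrib_right)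

lemma sum_mult_cyc_lap: "(\<Sum>k<s. y k * cyc_lap s y k) = cyc_dirichlet s y"
proof -
  have "(\<Sum>k<s. y k * y (cyc_pred s k)) = (\<Sum>k<s. y (cyc_succ s k) * y (cyc_pred s (cyc_succ s k)))"
    by (rule sum_cyc_succ[symmetric])
  also have "\<dots> = (\<Sum>k<s. y (cyc_succ s k) * y k)"
    by (intro sum.cong) auto
  finally have "(\<Sum>k<s. y k * y (cyc_pred s k)) = (\<Sum>k<s. y (cyc_succ s k) * y k)" .
  moreover have "(\<Sum>k<s. (y (cyc_succ s k))\<^sup>2) = (\<Sum>k<s. (y k)\<^sup>2)"
    by (rule sum_cyc_succ)
  ultimately show ?thesis
    unfolding cyc_lap_def cyc_dirichlet_def
    by (simp add: power2_eq_square algebra_simps sum.distrib sum_subtractf sum_distrib_left)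
qed

lemma sum_cyc_lap_sq_le: "(\<Sum>k<s. (cyc_lap s y k)\<^sup>2) \<le> 4 * cyc_dirichlet s y"
proof -
  define d where "d k = y k - y (cyc_succ s k)" for k
  have "cyc_lap s y k = d k - d (cyc_pred s k)" if "k < s" for k
    using that by (simp add: cyc_lap_def d_def)
  moreover have "(a - b)\<^sup>2 \<le> 2 * a\<^sup>2 + 2 * b\<^sup>2" for a b :: real
    using zero_le_power2[of "a + b"] by (simp add: power2_eq_square algebra_simps)
  ultimately have "(\<Sum>k<s. (cyc_lap s y k)\<^sup>2) \<le> (\<Sum>k<s. 2 * (d k)\<^sup>2 + 2 * (d (cyc_pred s k))\<^sup>2)"
    by (intro sum_mono) simp
  also have "\<dots> = 4 * (\<Sum>k<s. (d k)\<^sup>2)"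
    by (simp add: sum.distrib sum_distrib_left[symmetric] sum_cyc_pred[of "\<lambda>k. (d k)\<^sup>2"])
  also have "\<dots> = 4 * cyc_dirichlet s y"
    by (simp add: cyc_dirichlet_def d_def)
  finally show ?thesis .
qed

section \<open>Lower bounds for phiN\<close>

lemma phiN_ge_sum_cw_pot:
  assumes "\<alpha> > 0" "\<beta> > 2 * \<alpha>"
  shows "phiN \<alpha> \<beta> s y \<ge> (\<Sum>k<s. cw_pot (\<beta> + 2 * \<alpha>) (xAe \<alpha> \<beta> s y k))
          + \<alpha> * (\<beta> - 2 * \<alpha>) / (2 * (\<beta> + 2 * \<alpha>)) * cyc_dirichlet s y"
proof -
  define c where "c = \<beta> + 2 * \<alpha>"
  define z where "z k = xAe \<alpha> \<beta> s y k" for k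
  define L where "L k = cyc_lap s y k" for k
  define D where "D = cyc_dirichlet s y"
  have "c > 0"
    using assms by (simp add: c_def)
  have "c * quadA \<alpha> \<beta> s y - (\<Sum>k<s. (z k)\<^sup>2) = (\<Sum>k<s. c * z k * y k - (z k)\<^sup>2)"
    by (simp add: quadA_eq_sum_xAe z_def sum_distrib_left sum_subtractf mult.assoc)
  also have "\<dots> = (\<Sum>k<s. \<alpha> * c * (y k * L k) - \<alpha>\<^sup>2 * (L k)\<^sup>2)"
    by (rule sum.cong) (simp_all add: z_def L_def c_def xAe_eq_cyc_lap power2_eq_square algebra_simps)
  also have "\<dots> = \<alpha> * c * D - \<alpha>\<^sup>2 * (\<Sum>k<s. (L k)\<^sup>2)"
    by (simp add: sum_subtractf sum_distrib_left[symmetric] L_def D_def sum_mult_cyc_lap)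
  also have "\<dots> \<ge> \<alpha> * c * D - \<alpha>\<^sup>2 * (4 * D)"
    using mult_left_mono[OF sum_cyc_lap_sq_le[of s y] zero_le_power2[of \<alpha>]]
    by (simp add: L_def D_def)
  finally have "c * quadA \<alpha> \<beta> s y - (\<Sum>k<s. (z k)\<^sup>2) \<ge> \<alpha> * (\<beta> - 2 * \<alpha>) * D"
    by (simp add: c_def power2_eq_square algebra_simps)
  moreover have "(\<Sum>k<s. cw_pot c (z k)) = (\<Sum>k<s. (z k)\<^sup>2) / (2 * c) - (\<Sum>k<s. ln (cosh (z k)))"
    by (simp add: cw_pot_def sum_subtractf sum_divide_distrib)
  then have "phiN \<alpha> \<beta> s y - (\<Sum>k<s. cw_pot c (z k))
      = (c * quadA \<alpha> \<beta> s y - (\<Sum>k<s. (z k)\<^sup>2)) / (2 * c)"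
    using \<open>c > 0\<close> by (simp add: phiN_def z_def field_simps)
  ultimately show ?thesis
    using \<open>c > 0\<close> by (simp add: c_def z_def D_def field_simps)
qed

lemma phiN_const:
  assumes "\<beta> + 2 * \<alpha> \<noteq> 0"
  shows "phiN \<alpha> \<beta> s (\<lambda>k. m) = real s * cw_pot (\<beta> + 2 * \<alpha>) ((\<beta> + 2 * \<alpha>) * m)"
proof -
  have z: "xAe \<alpha> \<beta> s (\<lambda>k. m) k = (\<beta> + 2 * \<alpha>) * m" if "k < s" for k
    using that by (simp add: xAe_eq algebra_simps)
  then have "quadA \<alpha> \<beta> s (\<lambda>k. m) = real s * ((\<beta> + 2 * \<alpha>) * m * m)"
    by (simp add: quadA_eq_sum_xAe)
  then show ?thesis
    using assms by (simp add: phiN_def cw_pot_def z power2_eq_square field_simps)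
qed

lemma one_well_of_small_steps:
  fixes y :: "nat \<Rightarrow> real"
  assumes "r < m"
    and near: "\<And>k. k < s \<Longrightarrow> \<bar>y k - m\<bar> < r / 2 \<or> \<bar>y k + m\<bar> < r / 2"
    and steps: "\<And>k. Suc k < s \<Longrightarrow> \<bar>y k - y (Suc k)\<bar> < r"
  shows "(\<forall>k<s. \<bar>y k - m\<bar> < r / 2) \<or> (\<forall>k<s. \<bar>y k + m\<bar> < r / 2)"
proof -
  have "\<bar>y k - m\<bar> < r / 2 \<longleftrightarrow> \<bar>y 0 - m\<bar> < r / 2" if "k < s" for k
    using that
  proof (induction k)
    case (Suc k)
    have "\<bar>y (Suc k) - m\<bar> < r / 2 \<longleftrightarrow> \<bar>y k - m\<bar> < r / 2"
      using near[of k] near[of "Suc k"] steps[of k] Suc.prems \<open>r < m\<close>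
      unfolding abs_less_iff by auto
    with Suc show ?case
      by simp
  qed simp
  then show ?thesis
    using near by blast
qed

lemma phiN_excess_ge:
  assumes "\<alpha> > 0" "\<beta> > 2 * \<alpha>"
  defines "c \<equiv> \<beta> + 2 * \<alpha>"
  shows "phiN \<alpha> \<beta> s y - phiN \<alpha> \<beta> s (\<lambda>k. m)
    \<ge> (\<Sum>k<s. cw_pot c (xAe \<alpha> \<beta> s y k) - cw_pot c (c * m))
      + \<alpha> * (\<beta> - 2 * \<alpha>) / (2 * c) * cyc_dirichlet s y"
proof -
  have "phiN \<alpha> \<beta> s (\<lambda>k. m) = (\<Sum>k<s. cw_pot c (c * m))"
    using phiN_const[of \<beta> \<alpha> s m] assms by simp
  then show ?thesis
    using phiN_ge_sum_cw_pot[OF assms(1,2), of s y] unfolding c_def sum_subtractf by linarith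
qed

lemma near_wells_of_xAe_near_wells:
  assumes "\<alpha> > 0" "\<beta> + 2 * \<alpha> > 0" "k < s"
    and steps: "\<And>j. j < s \<Longrightarrow> \<bar>y j - y (cyc_succ s j)\<bar> < \<epsilon>"
    and "2 * \<alpha> * \<epsilon> \<le> (\<beta> + 2 * \<alpha>) * r / 4"
    and "\<bar>xAe \<alpha> \<beta> s y k - (\<beta> + 2 * \<alpha>) * m\<bar> < (\<beta> + 2 * \<alpha>) * r / 4
       \<or> \<bar>xAe \<alpha> \<beta> s y k + (\<beta> + 2 * \<alpha>) * m\<bar> < (\<beta> + 2 * \<alpha>) * r / 4"
  shows "\<bar>y k - m\<bar> < r / 2 \<or> \<bar>y k + m\<bar> < r / 2"
proof -
  define c where "c = \<beta> + 2 * \<alpha>"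
  define d where "d j = y j - y (cyc_succ s j)" for j
  have "\<bar>xAe \<alpha> \<beta> s y k - c * y k\<bar> = \<alpha> * \<bar>d k - d (cyc_pred s k)\<bar>"
    using assms(1,3) by (simp add: c_def d_def xAe_eq_cyc_lap cyc_lap_def abs_mult)
  moreover have "\<bar>d k - d (cyc_pred s k)\<bar> < 2 * \<epsilon>"
    using steps[OF assms(3)] steps[OF cyc_pred_less[OF assms(3)]] assms(3)
      abs_triangle_ineq4[of "d k" "d (cyc_pred s k)"] by (simp add: d_def)
  then have "\<alpha> * \<bar>d k - d (cyc_pred s k)\<bar> < \<alpha> * (2 * \<epsilon>)"
    using assms(1) by (rule mult_strict_left_mono)
  ultimately have "\<bar>xAe \<alpha> \<beta> s y k - c * y k\<bar> < c * r / 4"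
    using assms(5) by (simp add: c_def)
  then have "\<bar>c * (y k - m)\<bar> < c * (r / 2) \<or> \<bar>c * (y k + m)\<bar> < c * (r / 2)"
    using assms(6) unfolding abs_less_iff c_def by (simp add: algebra_simps) linarith
  then show ?thesis
    using assms(2) by (simp add: c_def abs_mult)
qed

lemma one_well_of_low_local_energy:
  fixes y :: "nat \<Rightarrow> real"
  assumes "\<alpha> > 0" "\<beta> + 2 * \<alpha> > 0" "r < m"
  defines "c \<equiv> \<beta> + 2 * \<alpha>"
  assumes "\<epsilon> \<le> r" "2 * \<alpha> * \<epsilon> \<le> c * r / 4"
    and gap: "\<And>t. c * r / 4 \<le> \<bar>t - c * m\<bar> \<Longrightarrow> c * r / 4 \<le> \<bar>t + c * m\<bar>
      \<Longrightarrow> cw_pot c (c * m) + \<eta> \<le> cw_pot c t"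
    and steps: "\<And>k. k < s \<Longrightarrow> \<bar>y k - y (cyc_succ s k)\<bar> < \<epsilon>"
    and fields: "\<And>k. k < s \<Longrightarrow> cw_pot c (xAe \<alpha> \<beta> s y k) < cw_pot c (c * m) + \<eta>"
  shows "(\<forall>k<s. \<bar>y k - m\<bar> < r / 2) \<or> (\<forall>k<s. \<bar>y k + m\<bar> < r / 2)"
proof (rule one_well_of_small_steps)
  show "r < m"
    by fact
  fix k
  assume "k < s"
  then have "\<bar>xAe \<alpha> \<beta> s y k - c * m\<bar> < c * r / 4 \<or> \<bar>xAe \<alpha> \<beta> s y k + c * m\<bar> < c * r / 4"
    using gap[of "xAe \<alpha> \<beta> s y k"] fields[of k] by force
  then show "\<bar>y k - m\<bar> < r / 2 \<or> \<bar>y k + m\<bar> < r / 2"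
    using near_wells_of_xAe_near_wells[of \<alpha> \<beta> k s y \<epsilon> r m, OF assms(1,2) \<open>k < s\<close> steps]
      assms(6) by (simp add: c_def)
next
  fix k
  assume "Suc k < s"
  then show "\<bar>y k - y (Suc k)\<bar> < r"
    using steps[of k] \<open>\<epsilon> \<le> r\<close> by (simp add: cyc_succ_def)
qed

lemma phiN_near_min_imp_one_well:
  assumes "\<alpha> > 0" "\<beta> > 2 * \<alpha>" "\<beta> + 2 * \<alpha> > 1" "0 < r" "r < m_star \<alpha> \<beta>"
  obtains \<rho> where "\<rho> > 0"
    "\<And>s y. phiN \<alpha> \<beta> s y < phiN \<alpha> \<beta> s (\<lambda>k. m_star \<alpha> \<beta>) + \<rho> \<Longrightarrow>
       (\<forall>k<s. \<bar>y k - m_star \<alpha> \<beta>\<bar> < r / 2) \<or> (\<forall>k<s. \<bar>y k + m_star \<alpha> \<beta>\<bar> < r / 2)"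
proof -
  define c where "c = \<beta> + 2 * \<alpha>"
  define m where "m = m_star \<alpha> \<beta>"
  have "c > 1"
    using assms by (simp add: c_def)
  have min: "cw_pot c (c * m) \<le> cw_pot c t" for t
    using m_star_min_cw_pot(1)[OF assms(3)] by (simp add: c_def m_def)
  obtain \<eta> where "\<eta> > 0" and gap:
    "\<And>t. c * r / 4 \<le> \<bar>t - c * m\<bar> \<Longrightarrow> c * r / 4 \<le> \<bar>t + c * m\<bar> \<Longrightarrow> cw_pot c (c * m) + \<eta> \<le> cw_pot c t"
    using m_star_min_cw_pot(2)[OF assms(3), of "c * r / 4"] \<open>c > 1\<close> \<open>0 < r\<close>
    by (auto simp: c_def m_def)
  define \<epsilon> where "\<epsilon> = min r (c * r / (8 * \<alpha>))"
  define \<gamma> where "\<gamma> = \<alpha> * (\<beta> - 2 * \<alpha>) / (2 * c)"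
  have "\<epsilon> > 0" "\<gamma> > 0"
    using assms \<open>c > 1\<close> by (simp_all add: \<epsilon>_def \<gamma>_def)
  have "2 * \<alpha> * \<epsilon> \<le> c * r / 4"
    using assms mult_left_mono[of \<epsilon> "c * r / (8 * \<alpha>)" "2 * \<alpha>"] by (simp add: \<epsilon>_def)
  \<comment> \<open>A bond of length at least \<open>\<epsilon>\<close> costs \<open>\<gamma> \<epsilon>\<^sup>2\<close>; a local field outside both wells costs \<open>\<eta>\<close>.\<close>
  show thesis
  proof (rule that[of "min (\<gamma> * \<epsilon>\<^sup>2) \<eta>"])
    show "min (\<gamma> * \<epsilon>\<^sup>2) \<eta> > 0"
      using \<open>\<gamma> > 0\<close> \<open>\<epsilon> > 0\<close> \<open>\<eta> > 0\<close> by simp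
    fix s y
    assume "phiN \<alpha> \<beta> s y < phiN \<alpha> \<beta> s (\<lambda>k. m_star \<alpha> \<beta>) + min (\<gamma> * \<epsilon>\<^sup>2) \<eta>"
    define e where "e k = cw_pot c (xAe \<alpha> \<beta> s y k) - cw_pot c (c * m)" for k
    have e_nonneg: "0 \<le> e k" for k
      using min by (simp add: e_def)
    have "0 \<le> sum e {..<s}" "0 \<le> \<gamma> * cyc_dirichlet s y"
      using e_nonneg \<open>\<gamma> > 0\<close> by (simp_all add: sum_nonneg cyc_dirichlet_def)
    moreover have "sum e {..<s} + \<gamma> * cyc_dirichlet s y < min (\<gamma> * \<epsilon>\<^sup>2) \<eta>"
      using phiN_excess_ge[OF assms(1,2), of s y m] \<open>phiN \<alpha> \<beta> s y < _\<close>
      unfolding e_def \<gamma>_def c_def m_def by linarith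
    moreover note min.cobounded1[of "\<gamma> * \<epsilon>\<^sup>2" \<eta>] min.cobounded2[of "\<gamma> * \<epsilon>\<^sup>2" \<eta>]
    ultimately have "\<gamma> * cyc_dirichlet s y < \<gamma> * \<epsilon>\<^sup>2" and "sum e {..<s} < \<eta>"
      by linarith+
    have "\<bar>y k - y (cyc_succ s k)\<bar> < \<epsilon>" if "k < s" for k
      using that \<open>\<gamma> * cyc_dirichlet s y < _\<close> \<open>\<gamma> > 0\<close> \<open>\<epsilon> > 0\<close>
        member_le_sum[of k "{..<s}" "\<lambda>k. (y k - y (cyc_succ s k))\<^sup>2"]
        power2_less_imp_less[of "\<bar>y k - y (cyc_succ s k)\<bar>" \<epsilon>]
      by (simp add: cyc_dirichlet_def)
    moreover have "cw_pot c (xAe \<alpha> \<beta> s y k) < cw_pot c (c * m) + \<eta>" if "k < s" for k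
      using member_le_sum[of k "{..<s}" e] e_nonneg that \<open>sum e {..<s} < \<eta>\<close>
      by (simp add: e_def)
    ultimately show "(\<forall>k<s. \<bar>y k - m_star \<alpha> \<beta>\<bar> < r / 2) \<or> (\<forall>k<s. \<bar>y k + m_star \<alpha> \<beta>\<bar> < r / 2)"
      using one_well_of_low_local_energy[of \<alpha> \<beta> r m \<epsilon> \<eta> s y] gap assms \<open>c > 1\<close>
        \<open>2 * \<alpha> * \<epsilon> \<le> c * r / 4\<close> unfolding c_def m_def \<epsilon>_def by auto
  qed
qed

lemma DeltaN_rescaled_not_one_well:
  assumes "N \<ge> 1" "s > 0" "0 < r" "x \<in> DeltaN \<alpha> \<beta> R N s r"
  shows "\<not> ((\<forall>k<s. \<bar>sqrt (real s / real N) * x k - m_star \<alpha> \<beta>\<bar> < r / 2)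
          \<or> (\<forall>k<s. \<bar>sqrt (real s / real N) * x k + m_star \<alpha> \<beta>\<bar> < r / 2))"
proof
  define c where "c = sqrt (real N / real s)"
  define m where "m = m_star \<alpha> \<beta>"
  have "c > 0"
    using assms by (simp add: c_def)
  have "c * sqrt (real s / real N) = 1"
    using assms by (simp add: c_def real_sqrt_mult[symmetric])
  then have x_eq: "x k = c * (sqrt (real s / real N) * x k)" for k
    by (simp add: mult.assoc[symmetric])
  assume "(\<forall>k<s. \<bar>sqrt (real s / real N) * x k - m_star \<alpha> \<beta>\<bar> < r / 2)
    \<or> (\<forall>k<s. \<bar>sqrt (real s / real N) * x k + m_star \<alpha> \<beta>\<bar> < r / 2)"
  then have "(\<forall>k<s. c * (m - r) \<le> x k \<and> x k \<le> c * (m + r))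
      \<or> (\<forall>k<s. c * (- m - r) \<le> x k \<and> x k \<le> c * (- m + r))"
    using \<open>c > 0\<close> \<open>0 < r\<close> unfolding m_def abs_less_iff by (subst (1 2 3 4) x_eq) auto
  then show False
    using assms(4) unfolding DeltaN_def Let_def c_def[symmetric] m_def[symmetric] by blast
qed

theorem lemma7p10:
  fixes \<alpha> \<beta> R r :: real and s :: "nat \<Rightarrow> nat"
  assumes "\<beta> > 2 * \<alpha>" and "\<alpha> > 0" and "\<beta> + 2 * \<alpha> > 1"
    and "\<And>N. s N > 0"
    and "(\<lambda>N. real (s N)) \<in> o(\<lambda>N. sqrt (real N) / ln (real N))"
    and "\<And>N. R > 2 * lam_max \<alpha> \<beta> (s N) / lam_min \<alpha> \<beta> (s N)"
    and "0 < r" and "r < m_star \<alpha> \<beta>"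
  shows "\<exists>\<rho>>0. \<forall>\<^sub>F N in at_top.
           \<forall>x\<in>DeltaN \<alpha> \<beta> R N (s N) r.
             phiN \<alpha> \<beta> (s N) (\<lambda>k. sqrt (real (s N) / real N) * x k)
               \<ge> phiN \<alpha> \<beta> (s N) (\<lambda>k. m_star \<alpha> \<beta>) + \<rho>"
proof -
  obtain \<rho> where "\<rho> > 0" and one_well:
    "\<And>n y. phiN \<alpha> \<beta> n y < phiN \<alpha> \<beta> n (\<lambda>k. m_star \<alpha> \<beta>) + \<rho> \<Longrightarrow>
       (\<forall>k<n. \<bar>y k - m_star \<alpha> \<beta>\<bar> < r / 2) \<or> (\<forall>k<n. \<bar>y k + m_star \<alpha> \<beta>\<bar> < r / 2)"
    using phiN_near_min_imp_one_well[OF assms(2,1,3,7,8)] by blast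
  have "\<forall>x\<in>DeltaN \<alpha> \<beta> R N (s N) r.
          phiN \<alpha> \<beta> (s N) (\<lambda>k. sqrt (real (s N) / real N) * x k)
            \<ge> phiN \<alpha> \<beta> (s N) (\<lambda>k. m_star \<alpha> \<beta>) + \<rho>" if "N \<ge> 1" for N
    using one_well DeltaN_rescaled_not_one_well[OF that assms(4) assms(7)] by (meson not_less)
  then show ?thesis
    using \<open>\<rho> > 0\<close> eventually_ge_at_top[of 1] by (blast intro: eventually_mono)
qed

end
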